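(* Let $S$ be a set of $n$ points in $\mathbb{R}^d$, where $d$ is a constant, with Euclidean distance; let $\varepsilon>0$ be a real constant, let $\theta$ be a constant with $0<\theta<\pi/4$ such that $1/(\cos\theta-\sin\theta)\le 1+\varepsilon$, let $\mathcal{C}$ be a cone collection as in the context consisting of $O(1/\theta^{d-1})$ cones, and let $f\ge0$ be an integer. Then each of the graphs $\mathrm{Yao}(\theta,2f+1)$ and $\Theta(\theta,2f+1)$ is an $f$-faulty-degree $(1+\varepsilon)$-spanner for $S$ with $O(fn)$ edges.
   Context: $K_S$ is the complete graph on $S$ with edge weights the Euclidean distances; all graphs have Euclidean edge weights; $\delta_X$ is shortest-path distance in $X$; $X\setminus F$ is $X$ with the edges of $F$ removed. A graph $G=(S,E)$ is an $f$-faulty-degree $t$-spanner for $S$ if for every $F\subseteq E$ with $(S,F)$ of maximum degree at most $f$ and all $p,q\in S$, $\delta_{G\setminus F}(p,q)\le t\,\delta_{K_S\setminus F}(p,q)$. $\mathcal{C}$ is a finite collection of cones with apex at the origin covering $\mathbb{R}^d$, each of angular diameter at most $\theta$, i.e. $\max\{\angle(0x,0y):x,y\in C\setminus\{0\}\}\le\theta$. For each $C\in\mathcal{C}$ fix a ray $\ell_C$ from the origin contained in $C$. For $p\in S$: $C+p=\{x+p:x\in C\}$, $\ell_C+p$ is the translate of $\ell_C$ emanating from $p$, and $S_{p,C}=(C+p)\cap(S\setminus\{p\})$. The graph $\mathrm{Yao}(\theta,k)$ has vertex set $S$ and, for each $p\in S$ and $C\in\mathcal{C}$, an edge from $p$ to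 each of the $\min(k,|S_{p,C}|)$ points of $S_{p,C}$ closest to $p$ in Euclidean distance (ties broken arbitrarily). The graph $\Theta(\theta,k)$ has vertex set $S$ and, for each $p\in S$ and $C\in\mathcal{C}$, an edge from $p$ to each of $\min(k,|S_{p,C}|)$ points of $S_{p,C}$ whose orthogonal projections onto $\ell_C+p$ are closest to $p$ (ties broken arbitrarily). *)

theory Defs
  imports "HOL-Analysis.Analysis"
begin

definition vec_angle :: "'a::euclidean_space \<Rightarrow> 'a \<Rightarrow> real" where
  "vec_angle x y = arccos ((x \<bullet> y) / (norm x * norm y))"

text \<open>Graphs on point sets: undirected edges are two-element sets {p,q}.
  Edge weights are Euclidean distances.\<close>
definition complete_edges :: "'a::euclidean_space set \<Rightarrow> 'a set set" where
  "complete_edges S = {{p, q} | p q. p \<in> S \<and> q \<in> S \<and> p \<noteq> q}"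

definition is_walk :: "'a set set \<Rightarrow> 'a \<Rightarrow> 'a \<Rightarrow> 'a list \<Rightarrow> bool" where
  "is_walk E p q w \<longleftrightarrow> w \<noteq> [] \<and> hd w = p \<and> last w = q \<and>
     (\<forall>i < length w - 1. {w ! i, w ! Suc i} \<in> E)"

definition walk_length :: "'a::euclidean_space list \<Rightarrow> real" where
  "walk_length w = (\<Sum>i < length w - 1. dist (w ! i) (w ! Suc i))"

text \<open>Shortest-path distance (infinite if no path exists).\<close>
definition gdist :: "'a::euclidean_space set set \<Rightarrow> 'a \<Rightarrow> 'a \<Rightarrow> ereal" where
  "gdist E p q = Inf {ereal (walk_length w) | w. is_walk E p q w}"

definition max_degree_le :: "'a set \<Rightarrow> 'a set set \<Rightarrow> nat \<Rightarrow> bool" where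
  "max_degree_le S F f \<longleftrightarrow> (\<forall>v\<in>S. card {e \<in> F. v \<in> e} \<le> f)"

definition faulty_degree_spanner ::
  "'a::euclidean_space set \<Rightarrow> 'a set set \<Rightarrow> nat \<Rightarrow> real \<Rightarrow> bool" where
  "faulty_degree_spanner S E f t \<longleftrightarrow> E \<subseteq> complete_edges S \<and>
     (\<forall>F \<subseteq> E. max_degree_le S F f \<longrightarrow>
        (\<forall>p\<in>S. \<forall>q\<in>S. gdist (E - F) p q \<le> ereal t * gdist (complete_edges S - F) p q))"

definition cone_collection ::
  "'a::euclidean_space set set \<Rightarrow> ('a set \<Rightarrow> 'a) \<Rightarrow> real \<Rightarrow> bool" where
  "cone_collection \<C> ray \<theta> \<longleftrightarrow> finite \<C> \<and> \<Union>\<C> = UNIV \<and>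
     (\<forall>C\<in>\<C>. cone C \<and>
        (\<forall>x\<in>C - {0}. \<forall>y\<in>C - {0}. vec_angle x y \<le> \<theta>) \<and>
        ray C \<noteq> 0 \<and> {t *\<^sub>R ray C | t. t \<ge> 0} \<subseteq> C)"

definition cone_pts :: "'a::euclidean_space set \<Rightarrow> 'a \<Rightarrow> 'a set \<Rightarrow> 'a set" where
  "cone_pts S p C = {x + p | x. x \<in> C} \<inter> (S - {p})"

text \<open>Generic k-nearest-in-each-cone graph w.r.t. a key (distance measure from p);
  ties are broken arbitrarily, i.e. any valid choice N is allowed.\<close>
definition cone_knn_graph ::
  "('a \<Rightarrow> 'a set \<Rightarrow> 'a \<Rightarrow> real) \<Rightarrow> 'a::euclidean_space set set \<Rightarrow> nat \<Rightarrow> 'a set \<Rightarrow> 'a set set \<Rightarrow> bool" where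
  "cone_knn_graph key \<C> k S E \<longleftrightarrow> (\<exists>N :: 'a \<Rightarrow> 'a set \<Rightarrow> 'a set.
     (\<forall>p\<in>S. \<forall>C\<in>\<C>. N p C \<subseteq> cone_pts S p C \<and>
        card (N p C) = min k (card (cone_pts S p C)) \<and>
        (\<forall>q\<in>N p C. \<forall>r\<in>cone_pts S p C - N p C. key p C q \<le> key p C r)) \<and>
     E = {{p, q} | p q. p \<in> S \<and> (\<exists>C\<in>\<C>. q \<in> N p C)})"

definition yao_graph :: "'a::euclidean_space set set \<Rightarrow> nat \<Rightarrow> 'a set \<Rightarrow> 'a set set \<Rightarrow> bool" where
  "yao_graph \<C> k S E \<longleftrightarrow> cone_knn_graph (\<lambda>p C q. dist p q) \<C> k S E"

definition proj_dist :: "('a::euclidean_space set \<Rightarrow> 'a) \<Rightarrow> 'a \<Rightarrow> 'a set \<Rightarrow> 'a \<Rightarrow> real" where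
  "proj_dist ray p C q = dist p (p + (((q - p) \<bullet> ray C) / (ray C \<bullet> ray C)) *\<^sub>R ray C)"

definition theta_graph ::
  "'a::euclidean_space set set \<Rightarrow> ('a set \<Rightarrow> 'a) \<Rightarrow> nat \<Rightarrow> 'a set \<Rightarrow> 'a set set \<Rightarrow> bool" where
  "theta_graph \<C> ray k S E \<longleftrightarrow> cone_knn_graph (proj_dist ray) \<C> k S E"

end

theory Submission
  imports Defs
begin

text \<open>Fix a fault set F of maximum degree at most f and an edge pq of K_S that survives. Let C be
  the cone at p containing q. If q is one of the 2f+1 chosen neighbours of p in C, the edge pq
  itself survives. Otherwise at most f of the 2f+1 chosen neighbours r are cut off from p and at
  most f of them from q, so some r has both pr and rq intact. Since r is at least as close to p
  as q (in distance, resp. in projection onto the cone's ray) and the cone is narrow, we get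
  |pr| + t|rq| \<le> t|pq| and |rq| < |pq| whenever t (cos \<theta> - sin \<theta>) \<ge> 1. Induction on the rank
  of |pq| among the distances in S then yields a path of length at most t|pq| in G minus F. The
  size bound is immediate: every point contributes at most 2f+1 edges per cone.\<close>

lemma cone_pts_iff: "q \<in> cone_pts S p C \<longleftrightarrow> q - p \<in> C \<and> q \<in> S \<and> q \<noteq> p"
  unfolding cone_pts_def by (auto intro!: exI[of _ "q - p"])

lemma finite_cone_pts: "finite S \<Longrightarrow> finite (cone_pts S p C)"
  by (simp add: cone_pts_def)

section \<open>Walks and fault sets\<close>

lemma is_walk_Cons_Cons:
  "is_walk E p q (x # y # ys) \<longleftrightarrow> p = x \<and> {x, y} \<in> E \<and> is_walk E y q (y # ys)"
  unfolding is_walk_def by (auto simp: All_less_Suc2)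

lemma walk_length_Cons_Cons: "walk_length (x # y # ys) = dist x y + walk_length (y # ys)"
  unfolding walk_length_def by (simp del: sum.lessThan_Suc add: sum.lessThan_Suc_shift)

lemma is_walk_singleton: "is_walk E p q [x] \<longleftrightarrow> p = x \<and> q = x"
  unfolding is_walk_def by auto

lemma walk_length_singleton: "walk_length [x] = 0"
  unfolding walk_length_def by simp

lemma walk_prepend_edge:
  assumes "is_walk E q z w" and "{p, q} \<in> E"
  shows "is_walk E p z (p # w) \<and> walk_length (p # w) = dist p q + walk_length w"
proof -
  obtain ws where "w = q # ws"
    using assms(1) unfolding is_walk_def by (cases w) auto
  then show ?thesis using assms by (simp add: is_walk_Cons_Cons walk_length_Cons_Cons)
qed

lemma gdist_le_if_walks_stretch:
  assumes "t > 0"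
    and stretch: "\<And>w. is_walk E p q w \<Longrightarrow>
      \<exists>w'. is_walk E' p q w' \<and> walk_length w' \<le> t * walk_length w"
  shows "gdist E' p q \<le> ereal t * gdist E p q"
proof -
  have "gdist E' p q \<le> Inf {ereal t * x | x. x \<in> {ereal (walk_length w) | w. is_walk E p q w}}"
  proof (rule Inf_greatest)
    fix y assume "y \<in> {ereal t * x | x. x \<in> {ereal (walk_length w) | w. is_walk E p q w}}"
    then obtain w where y: "y = ereal t * ereal (walk_length w)" and w: "is_walk E p q w"
      by blast
    obtain w' where w': "is_walk E' p q w'" "walk_length w' \<le> t * walk_length w"
      using stretch[OF w] by blast
    have "gdist E' p q \<le> ereal (walk_length w')"
      unfolding gdist_def using w'(1) by (intro Inf_lower) blast
    also have "\<dots> \<le> y" using w'(2) y by simp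
    finally show "gdist E' p q \<le> y" .
  qed
  also have "\<dots> = ereal t * gdist E p q"
    unfolding gdist_def using \<open>t > 0\<close> by (subst ereal_Inf_cmult) auto
  finally show ?thesis .
qed

lemma complete_edges_doubletonD:
  assumes "{a, b} \<in> complete_edges S"
  shows "a \<noteq> b \<and> a \<in> S \<and> b \<in> S"
proof -
  obtain x y where "{a, b} = {x, y}" "x \<in> S" "y \<in> S" "x \<noteq> y"
    using assms unfolding complete_edges_def by blast
  then show ?thesis by (metis doubleton_eq_iff)
qed

lemma finite_complete_edges: "finite S \<Longrightarrow> finite (complete_edges S)"
  by (rule finite_subset[of _ "Pow S"]) (auto simp: complete_edges_def)

lemma card_incident_le:
  assumes "max_degree_le S F f" and "finite F" and "v \<in> S" and "v \<notin> A"
  shows "card {r \<in> A. {v, r} \<in> F} \<le> f"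
proof -
  have "inj_on (\<lambda>r. {v, r}) {r \<in> A. {v, r} \<in> F}"
    using \<open>v \<notin> A\<close> by (intro inj_onI) (metis doubleton_eq_iff mem_Collect_eq)
  moreover have "(\<lambda>r. {v, r}) ` {r \<in> A. {v, r} \<in> F} \<subseteq> {e \<in> F. v \<in> e}" by auto
  ultimately have "card {r \<in> A. {v, r} \<in> F} \<le> card {e \<in> F. v \<in> e}"
    using \<open>finite F\<close> by (intro card_inj_on_le) auto
  also have "\<dots> \<le> f" using assms(1,3) unfolding max_degree_le_def by blast
  finally show ?thesis .
qed

section \<open>Geometry of narrow cones\<close>

lemma inner_ge_cos_mul_norm:
  fixes u v :: "'a::euclidean_space"
  assumes "vec_angle u v \<le> \<theta>" and "\<theta> \<le> pi"
  shows "cos \<theta> * (norm u * norm v) \<le> u \<bullet> v"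
proof (cases "u = 0 \<or> v = 0")
  case True
  then show ?thesis by auto
next
  case False
  define x where "x = (u \<bullet> v) / (norm u * norm v)"
  have pos: "norm u * norm v > 0" using False by auto
  have "\<bar>u \<bullet> v\<bar> \<le> norm u * norm v" by (rule Cauchy_Schwarz_ineq2)
  then have x: "-1 \<le> x" "x \<le> 1" using pos unfolding x_def by (auto simp: divide_simps abs_le_iff)
  have "arccos x \<le> \<theta>" using assms(1) unfolding vec_angle_def x_def .
  then have "cos \<theta> \<le> cos (arccos x)"
    using assms(2) x by (intro cos_monotone_0_pi_le) (auto intro: arccos_lbound)
  then have "cos \<theta> \<le> x" using x by simp
  then show ?thesis using pos unfolding x_def by (simp add: divide_simps)
qed

text \<open>The law of cosines with the angle bounded by \<theta> and the sine bound
  2|u| sin \<theta> (|v| - |u| cos \<theta>) \<ge> 0.\<close>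
lemma norm_diff_le_cos_sin:
  fixes u v :: "'a::real_inner"
  assumes angle: "cos \<theta> * (norm u * norm v) \<le> u \<bullet> v" and proj: "cos \<theta> * norm u \<le> norm v"
    and "0 \<le> \<theta>" and "\<theta> \<le> pi"
  shows "norm (v - u) \<le> norm v - (cos \<theta> - sin \<theta>) * norm u"
proof -
  define a b c s where "a = norm u" and "b = norm v" and "c = cos \<theta>" and "s = sin \<theta>"
  have s: "s \<ge> 0" using assms(3,4) unfolding s_def by (rule sin_ge_zero)
  have a: "a \<ge> 0" unfolding a_def by simp
  have cs: "c\<^sup>2 + s\<^sup>2 = 1" unfolding c_def s_def by simp
  have ca: "c * a \<le> b" using proj unfolding a_def b_def c_def .
  have "(norm (v - u))\<^sup>2 = a\<^sup>2 + b\<^sup>2 - 2 * (u \<bullet> v)"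
    unfolding a_def b_def by (simp add: power2_norm_eq_inner algebra_simps inner_commute)
  also have "\<dots> \<le> a\<^sup>2 + b\<^sup>2 - 2 * a * b * c"
    using angle unfolding a_def b_def c_def by (simp add: algebra_simps)
  also have "\<dots> \<le> (b - (c - s) * a)\<^sup>2"
  proof -
    have "c * a * (2 * a * s) \<le> b * (2 * a * s)"
      using ca a s by (intro mult_right_mono) auto
    moreover have "(b - (c - s) * a)\<^sup>2 = a\<^sup>2 + b\<^sup>2 - 2 * a * b * c + (2 * a * b * s - 2 * a * a * c * s)"
      using cs by algebra
    ultimately show ?thesis by (simp add: algebra_simps)
  qed
  finally have sq: "(norm (v - u))\<^sup>2 \<le> (b - (c - s) * a)\<^sup>2" .
  have "(c - s) * a \<le> c * a" using a s by (intro mult_right_mono) auto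
  then have "0 \<le> b - (c - s) * a" using ca by linarith
  with sq have "norm (v - u) \<le> b - (c - s) * a" by (rule power2_le_imp_le)
  then show ?thesis unfolding a_def b_def c_def s_def .
qed

lemma cos_minus_sin_pos:
  assumes "0 < \<theta>" and "\<theta> < pi / 4"
  shows "cos \<theta> - sin \<theta> > 0"
proof -
  have "sin \<theta> < sin (pi / 4)" using assms by (subst sin_mono_less_eq) auto
  moreover have "cos (pi / 4) < cos \<theta>" using assms by (subst cos_mono_less_eq) auto
  ultimately show ?thesis by (simp add: cos_45 sin_45)
qed

lemma cone_collection_inner_ge:
  assumes "cone_collection \<C> ray \<theta>" and "\<theta> \<le> pi" and "C \<in> \<C>"
    and "x \<in> C - {0}" and "y \<in> C - {0}"
  shows "cos \<theta> * (norm x * norm y) \<le> x \<bullet> y"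
  using assms unfolding cone_collection_def by (intro inner_ge_cos_mul_norm) auto

lemma cone_collection_ray:
  assumes "cone_collection \<C> ray \<theta>" and "C \<in> \<C>"
  shows "ray C \<in> C - {0}"
proof -
  have "{t *\<^sub>R ray C | t. t \<ge> 0} \<subseteq> C" and "ray C \<noteq> 0"
    using assms unfolding cone_collection_def by blast+
  moreover have "ray C \<in> {t *\<^sub>R ray C | t. t \<ge> 0}"
    by (rule CollectI, rule exI[of _ 1]) simp
  ultimately show ?thesis by blast
qed

text \<open>key p C ranks the points of the cone C at p (distance for Yao, length of the projection
  onto the ray for Theta); this is the property of the ranking that the spanner argument needs.\<close>
definition cone_shortcut :: "('a::euclidean_space \<Rightarrow> 'a set \<Rightarrow> 'a \<Rightarrow> real) \<Rightarrow> 'a set set \<Rightarrow> real \<Rightarrow> bool"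
  where "cone_shortcut key \<C> t \<longleftrightarrow> (\<forall>C\<in>\<C>. \<forall>p q r. q - p \<in> C - {0} \<longrightarrow> r - p \<in> C - {0} \<longrightarrow>
     key p C r \<le> key p C q \<longrightarrow> dist p r + t * dist r q \<le> t * dist p q \<and> dist r q < dist p q)"

lemma cone_shortcutD:
  assumes "cone_shortcut key \<C> t" and "C \<in> \<C>" and "q - p \<in> C - {0}" and "r - p \<in> C - {0}"
    and "key p C r \<le> key p C q"
  shows "dist p r + t * dist r q \<le> t * dist p q \<and> dist r q < dist p q"
  using assms unfolding cone_shortcut_def by blast

lemma cone_shortcut_if_cos_dist_le:
  assumes cc: "cone_collection \<C> ray \<theta>" and "0 < \<theta>" and "\<theta> < pi / 4"
    and t: "1 \<le> t * (cos \<theta> - sin \<theta>)"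
    and cos_le: "\<And>C p q r. C \<in> \<C> \<Longrightarrow> q - p \<in> C - {0} \<Longrightarrow> r - p \<in> C - {0} \<Longrightarrow>
      key p C r \<le> key p C q \<Longrightarrow> cos \<theta> * dist p r \<le> dist p q"
  shows "cone_shortcut key \<C> t"
  unfolding cone_shortcut_def
proof (intro ballI allI impI)
  fix C p q r
  assume C: "C \<in> \<C>" and q: "q - p \<in> C - {0}" and r: "r - p \<in> C - {0}" and key: "key p C r \<le> key p C q"
  define u v m where "u = r - p" and "v = q - p" and "m = cos \<theta> - sin \<theta>"
  have "\<theta> \<le> pi" using \<open>\<theta> < pi / 4\<close> pi_gt_zero by linarith
  have m: "m > 0" using cos_minus_sin_pos[OF \<open>0 < \<theta>\<close> \<open>\<theta> < pi / 4\<close>] unfolding m_def .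
  have tm: "1 \<le> t * m" using t unfolding m_def .
  then have "t > 0" using m zero_less_mult_iff[of t m] by linarith
  have dists: "dist p r = norm u" "dist p q = norm v" "dist r q = norm (v - u)"
    unfolding u_def v_def by (simp_all add: dist_norm norm_minus_commute)
  have angle: "cos \<theta> * (norm u * norm v) \<le> u \<bullet> v"
    using cone_collection_inner_ge[OF cc \<open>\<theta> \<le> pi\<close> C r q] unfolding u_def v_def .
  have proj: "cos \<theta> * norm u \<le> norm v" using cos_le[OF C q r key] dists by simp
  have le: "norm (v - u) \<le> norm v - m * norm u"
    unfolding m_def using \<open>0 < \<theta>\<close> \<open>\<theta> \<le> pi\<close> by (intro norm_diff_le_cos_sin[OF angle proj]) auto
  have u: "norm u > 0" using r unfolding u_def by simp
  have "norm u \<le> (t * m) * norm u" using tm u by (simp add: mult_le_cancel_right1)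
  moreover have "t * norm (v - u) \<le> t * (norm v - m * norm u)"
    using le \<open>t > 0\<close> by (intro mult_left_mono) auto
  ultimately have "norm u + t * norm (v - u) \<le> t * norm v" by (simp add: algebra_simps)
  moreover have "m * norm u > 0" using m u by simp
  then have "norm (v - u) < norm v" using le by linarith
  ultimately show "dist p r + t * dist r q \<le> t * dist p q \<and> dist r q < dist p q"
    using dists by simp
qed

lemma cone_shortcut_dist:
  assumes "cone_collection \<C> ray \<theta>" and "0 < \<theta>" and "\<theta> < pi / 4"
    and "1 \<le> t * (cos \<theta> - sin \<theta>)"
  shows "cone_shortcut (\<lambda>p C q. dist p q) \<C> t"
proof (rule cone_shortcut_if_cos_dist_le[OF assms])
  fix p q r :: 'a and C
  assume "dist p r \<le> dist p q"
  moreover have "cos \<theta> * dist p r \<le> 1 * dist p r" by (intro mult_right_mono) auto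
  ultimately show "cos \<theta> * dist p r \<le> dist p q" by linarith
qed

lemma proj_dist_eq:
  assumes "ray C \<noteq> 0"
  shows "proj_dist ray p C q = \<bar>(q - p) \<bullet> ray C\<bar> / norm (ray C)"
proof -
  have "proj_dist ray p C q = \<bar>((q - p) \<bullet> ray C) / (ray C \<bullet> ray C)\<bar> * norm (ray C)"
    unfolding proj_dist_def by (simp add: dist_norm)
  also have "\<dots> = \<bar>(q - p) \<bullet> ray C\<bar> / norm (ray C)"
    using assms by (simp add: power2_norm_eq_inner[symmetric] power2_eq_square abs_divide)
  finally show ?thesis .
qed

lemma cone_shortcut_proj_dist:
  assumes cc: "cone_collection \<C> ray \<theta>" and "0 < \<theta>" and "\<theta> < pi / 4"
    and "1 \<le> t * (cos \<theta> - sin \<theta>)"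
  shows "cone_shortcut (proj_dist ray) \<C> t"
proof (rule cone_shortcut_if_cos_dist_le[OF assms])
  fix C p q r
  assume C: "C \<in> \<C>" and q: "q - p \<in> C - {0}" and r: "r - p \<in> C - {0}"
    and key: "proj_dist ray p C r \<le> proj_dist ray p C q"
  define w where "w = ray C"
  have w: "w \<in> C - {0}" using cone_collection_ray[OF cc C] unfolding w_def .
  then have nw: "norm w > 0" by simp
  have "\<theta> \<le> pi" using \<open>\<theta> < pi / 4\<close> pi_gt_zero by linarith
  have "cos \<theta> * (norm (r - p) * norm w) \<le> (r - p) \<bullet> w"
    using cone_collection_inner_ge[OF cc \<open>\<theta> \<le> pi\<close> C r w] .
  also have "\<dots> \<le> \<bar>(q - p) \<bullet> w\<bar>"
    using key nw w unfolding w_def by (simp add: proj_dist_eq divide_le_cancel)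
  also have "\<dots> \<le> norm (q - p) * norm w" by (rule Cauchy_Schwarz_ineq2)
  finally have "cos \<theta> * norm (r - p) \<le> norm (q - p)" using nw by simp
  then show "cos \<theta> * dist p r \<le> dist p q" by (simp add: dist_norm norm_minus_commute)
qed

section \<open>Fault tolerance of cone graphs with 2f+1 neighbours per cone\<close>

locale cone_knn_selection =
  fixes key :: "'a::euclidean_space \<Rightarrow> 'a set \<Rightarrow> 'a \<Rightarrow> real" and \<C> :: "'a set set"
    and f :: nat and S :: "'a set" and N :: "'a \<Rightarrow> 'a set \<Rightarrow> 'a set"
  assumes finite_S: "finite S" and cones_cover: "\<Union>\<C> = UNIV"
    and N_subset: "\<And>p C. p \<in> S \<Longrightarrow> C \<in> \<C> \<Longrightarrow> N p C \<subseteq> cone_pts S p C"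
    and card_N: "\<And>p C. p \<in> S \<Longrightarrow> C \<in> \<C> \<Longrightarrow> card (N p C) = min (2 * f + 1) (card (cone_pts S p C))"
    and N_nearest: "\<And>p C q r. p \<in> S \<Longrightarrow> C \<in> \<C> \<Longrightarrow> q \<in> N p C \<Longrightarrow> r \<in> cone_pts S p C - N p C \<Longrightarrow>
      key p C q \<le> key p C r"
begin

definition edges :: "'a set set"
  where "edges = {{p, q} | p q. p \<in> S \<and> (\<exists>C\<in>\<C>. q \<in> N p C)}"

definition closer_pairs :: "real \<Rightarrow> ('a \<times> 'a) set"
  where "closer_pairs d = {(a, b) \<in> S \<times> S. dist a b < d}"

lemma edges_subset_complete_edges: "edges \<subseteq> complete_edges S"
  using N_subset unfolding edges_def complete_edges_def cone_pts_def by blast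

lemma finite_N: "p \<in> S \<Longrightarrow> C \<in> \<C> \<Longrightarrow> finite (N p C)"
  by (rule finite_subset[OF N_subset finite_cone_pts[OF finite_S]])

lemma card_closer_pairs_less:
  assumes "x \<in> S" and "y \<in> S" and "dist x y < d"
  shows "card (closer_pairs (dist x y)) < card (closer_pairs d)"
proof (rule psubset_card_mono)
  show "finite (closer_pairs d)"
    unfolding closer_pairs_def by (rule finite_subset[of _ "S \<times> S"]) (use finite_S in auto)
  show "closer_pairs (dist x y) \<subset> closer_pairs d"
    unfolding closer_pairs_def
  proof
    show "{(a, b) \<in> S \<times> S. dist a b < dist x y} \<subseteq> {(a, b) \<in> S \<times> S. dist a b < d}"
      using assms(3) by auto
    show "{(a, b) \<in> S \<times> S. dist a b < dist x y} \<noteq> {(a, b) \<in> S \<times> S. dist a b < d}"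
      using assms by blast
  qed
qed

lemma fault_free_neighbour:
  assumes p: "p \<in> S" and C: "C \<in> \<C>" and q: "q \<in> cone_pts S p C - N p C"
    and "finite F" and deg: "max_degree_le S F f"
  shows "\<exists>r\<in>N p C. {p, r} \<notin> F \<and> {r, q} \<notin> F"
proof (rule ccontr)
  define A B where "A = {r \<in> N p C. {p, r} \<in> F}" and "B = {r \<in> N p C. {q, r} \<in> F}"
  assume "\<not> ?thesis"
  then have "N p C \<subseteq> A \<union> B" unfolding A_def B_def by (auto simp: insert_commute)
  have "finite (A \<union> B)" using finite_N[OF p C] unfolding A_def B_def by simp
  have "card (N p C) < card (cone_pts S p C)"
    using N_subset[OF p C] q finite_cone_pts[OF finite_S] by (intro psubset_card_mono) auto
  then have "2 * f + 1 = card (N p C)" using card_N[OF p C] by simp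
  also have "\<dots> \<le> card (A \<union> B)" using \<open>N p C \<subseteq> A \<union> B\<close> \<open>finite (A \<union> B)\<close> by (rule card_mono[rotated])
  also have "\<dots> \<le> card A + card B" by (rule card_Un_le)
  also have "\<dots> \<le> f + f"
    using N_subset[OF p C] q p \<open>finite F\<close> unfolding A_def B_def
    by (intro add_mono card_incident_le[OF deg]) (auto simp: cone_pts_iff)
  finally show False by simp
qed

text \<open>Stated for an arbitrary continuation w from q, so that stretched edges can be chained
  without concatenating walks.\<close>
lemma detour_walk:
  assumes shortcut: "cone_shortcut key \<C> t" and "t \<ge> 1"
    and FE: "F \<subseteq> edges" and deg: "max_degree_le S F f"
  shows "p \<in> S \<Longrightarrow> q \<in> S \<Longrightarrow> p \<noteq> q \<Longrightarrow> {p, q} \<notin> F \<Longrightarrow> is_walk (edges - F) q z w \<Longrightarrow>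
    \<exists>w'. is_walk (edges - F) p z w' \<and> walk_length w' \<le> t * dist p q + walk_length w"
proof (induction "card (closer_pairs (dist p q))" arbitrary: p q w rule: less_induct)
  case less
  note p = \<open>p \<in> S\<close> and w = \<open>is_walk (edges - F) q z w\<close>
  obtain C where C: "C \<in> \<C>" "q - p \<in> C" using cones_cover by blast
  then have q: "q \<in> cone_pts S p C" using less.prems by (simp add: cone_pts_iff)
  show ?case
  proof (cases "q \<in> N p C")
    case True
    then have "{p, q} \<in> edges - F" using less.prems C unfolding edges_def by blast
    then have "is_walk (edges - F) p z (p # w) \<and> walk_length (p # w) = dist p q + walk_length w"
      using w by (rule walk_prepend_edge[rotated])
    moreover have "dist p q \<le> t * dist p q" using \<open>t \<ge> 1\<close> by (simp add: mult_le_cancel_right1)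
    ultimately show ?thesis by (intro exI[of _ "p # w"]) auto
  next
    case False
    have "finite F"
      using finite_subset[OF FE] finite_subset[OF edges_subset_complete_edges] finite_complete_edges[OF finite_S]
      by blast
    then obtain r where r: "r \<in> N p C" "{p, r} \<notin> F" "{r, q} \<notin> F"
      using fault_free_neighbour[OF p C(1) _ _ deg] q False by blast
    have r_cone: "r \<in> cone_pts S p C" and "r \<noteq> q" using r N_subset[OF p C(1)] False by auto
    then have "r \<in> S" by (simp add: cone_pts_iff)
    have "key p C r \<le> key p C q" using N_nearest[OF p C(1) r(1)] q False by blast
    then have short: "dist p r + t * dist r q \<le> t * dist p q \<and> dist r q < dist p q"
      using cone_shortcutD[OF shortcut C(1)] q r_cone by (simp add: cone_pts_iff)
    then have "card (closer_pairs (dist r q)) < card (closer_pairs (dist p q))"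
      using \<open>r \<in> S\<close> less.prems(2) by (intro card_closer_pairs_less) auto
    from less.hyps[OF this \<open>r \<in> S\<close> less.prems(2) \<open>r \<noteq> q\<close> r(3) w]
    obtain w1 where w1: "is_walk (edges - F) r z w1" "walk_length w1 \<le> t * dist r q + walk_length w"
      by blast
    have "{p, r} \<in> edges - F" using r p C(1) unfolding edges_def by blast
    then have "is_walk (edges - F) p z (p # w1) \<and> walk_length (p # w1) = dist p r + walk_length w1"
      using w1(1) by (rule walk_prepend_edge[rotated])
    moreover have "dist p r + walk_length w1 \<le> t * dist p q + walk_length w"
      using w1(2) short by linarith
    ultimately show ?thesis by (intro exI[of _ "p # w1"]) simp
  qed
qed

lemma stretch_walk:
  assumes "cone_shortcut key \<C> t" and "t \<ge> 1" and "F \<subseteq> edges" and "max_degree_le S F f"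
  shows "is_walk (complete_edges S - F) x z w \<Longrightarrow>
    \<exists>w'. is_walk (edges - F) x z w' \<and> walk_length w' \<le> t * walk_length w"
proof (induction w arbitrary: x)
  case Nil
  then show ?case by (simp add: is_walk_def)
next
  case (Cons a w)
  show ?case
  proof (cases w)
    case Nil
    then show ?thesis using Cons.prems
      by (intro exI[of _ "[a]"]) (simp add: is_walk_singleton walk_length_singleton)
  next
    case (Cons b ws)
    have "x = a" and e: "{a, b} \<in> complete_edges S - F"
      and wb: "is_walk (complete_edges S - F) b z w"
      using \<open>is_walk (complete_edges S - F) x z (a # w)\<close> unfolding \<open>w = b # ws\<close>
      by (simp_all add: is_walk_Cons_Cons)
    obtain w2 where w2: "is_walk (edges - F) b z w2" "walk_length w2 \<le> t * walk_length w"
      using Cons.IH[OF wb] by blast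
    have "a \<noteq> b" "a \<in> S" "b \<in> S" using complete_edges_doubletonD[of a b S] e by auto
    then obtain w' where w': "is_walk (edges - F) a z w'" "walk_length w' \<le> t * dist a b + walk_length w2"
      using detour_walk[OF assms _ _ _ _ w2(1)] e by blast
    have "walk_length (a # w) = dist a b + walk_length w"
      unfolding \<open>w = b # ws\<close> by (rule walk_length_Cons_Cons)
    then have "walk_length w' \<le> t * walk_length (a # w)" using w'(2) w2(2) by (simp add: algebra_simps)
    then show ?thesis using w' \<open>x = a\<close> by blast
  qed
qed

lemma faulty_degree_spanner_edges:
  assumes "cone_shortcut key \<C> t" and "t \<ge> 1"
  shows "faulty_degree_spanner S edges f t"
  unfolding faulty_degree_spanner_def
proof (intro conjI edges_subset_complete_edges allI impI ballI)
  fix F p q assume "F \<subseteq> edges" and "max_degree_le S F f"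
  then show "gdist (edges - F) p q \<le> ereal t * gdist (complete_edges S - F) p q"
    using \<open>t \<ge> 1\<close> stretch_walk[OF assms] by (intro gdist_le_if_walks_stretch) auto
qed

lemma card_edges_le:
  assumes "finite \<C>"
  shows "card edges \<le> card S * card \<C> * (2 * f + 1)"
proof -
  define T where "T = (SIGMA p:S. \<Union>C\<in>\<C>. N p C)"
  have "finite T" unfolding T_def using finite_S assms finite_N by blast
  have "edges = (\<lambda>(p, q). {p, q}) ` T" unfolding edges_def T_def by auto
  then have "card edges \<le> card T" using \<open>finite T\<close> by (simp add: card_image_le)
  also have "\<dots> = (\<Sum>p\<in>S. card (\<Union>C\<in>\<C>. N p C))"
    unfolding T_def using finite_S assms finite_N by (intro card_SigmaI) auto
  also have "\<dots> \<le> (\<Sum>p\<in>S. \<Sum>C\<in>\<C>. card (N p C))"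
    using assms finite_N by (intro sum_mono card_UN_le) auto
  also have "\<dots> \<le> (\<Sum>p\<in>S. \<Sum>C\<in>\<C>. 2 * f + 1)"
    using card_N by (intro sum_mono) auto
  also have "\<dots> = card S * card \<C> * (2 * f + 1)" by (simp add: algebra_simps)
  finally show ?thesis .
qed

end

lemma cone_knn_graph_spanner:
  assumes G: "cone_knn_graph key \<C> (2 * f + 1) S E" and "cone_shortcut key \<C> t" and "t \<ge> 1"
    and "finite S" and "\<Union>\<C> = UNIV" and "finite \<C>"
  shows "faulty_degree_spanner S E f t \<and> card E \<le> card S * card \<C> * (2 * f + 1)"
proof -
  obtain N where N: "\<forall>p\<in>S. \<forall>C\<in>\<C>. N p C \<subseteq> cone_pts S p C \<and>
      card (N p C) = min (2 * f + 1) (card (cone_pts S p C)) \<and>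
      (\<forall>q\<in>N p C. \<forall>r\<in>cone_pts S p C - N p C. key p C q \<le> key p C r)"
    and E: "E = {{p, q} | p q. p \<in> S \<and> (\<exists>C\<in>\<C>. q \<in> N p C)}"
    using G unfolding cone_knn_graph_def by blast
  interpret cone_knn_selection key \<C> f S N
    using N assms(4,5) by unfold_locales blast+
  have "E = edges" unfolding E edges_def ..
  then show ?thesis using faulty_degree_spanner_edges card_edges_le assms(2,3,6) by simp
qed

text \<open>The constant of the size bound is 2|\<C>|.\<close>
theorem theorem4:
  fixes \<C> :: "'a::euclidean_space set set" and ray :: "'a set \<Rightarrow> 'a"
    and \<epsilon> \<theta> K :: real
  assumes "\<epsilon> > 0" and "0 < \<theta>" and "\<theta> < pi / 4"
    and "1 / (cos \<theta> - sin \<theta>) \<le> 1 + \<epsilon>"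
    and "cone_collection \<C> ray \<theta>"
    and "real (card \<C>) \<le> K / \<theta> ^ (DIM('a) - 1)"
  shows "\<exists>c. \<forall>(S :: 'a set) (f :: nat) E. finite S \<longrightarrow>
           (yao_graph \<C> (2 * f + 1) S E \<or> theta_graph \<C> ray (2 * f + 1) S E) \<longrightarrow>
           faulty_degree_spanner S E f (1 + \<epsilon>) \<and>
           real (card E) \<le> c * real (f + 1) * real (card S)"
proof (intro exI[of _ "real (2 * card \<C>)"] allI impI)
  fix S :: "'a set" and f :: nat and E
  assume "finite S" and G: "yao_graph \<C> (2 * f + 1) S E \<or> theta_graph \<C> ray (2 * f + 1) S E"
  have cover: "\<Union>\<C> = UNIV" and "finite \<C>" using assms(5) unfolding cone_collection_def by auto
  have "1 \<le> (1 + \<epsilon>) * (cos \<theta> - sin \<theta>)"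
    using assms(4) cos_minus_sin_pos[OF assms(2,3)] by (simp add: divide_le_eq mult.commute)
  then have yao: "cone_shortcut (\<lambda>p C q. dist p q) \<C> (1 + \<epsilon>)"
    and theta: "cone_shortcut (proj_dist ray) \<C> (1 + \<epsilon>)"
    using cone_shortcut_dist cone_shortcut_proj_dist assms(2,3,5) by blast+
  have "1 \<le> 1 + \<epsilon>" using assms(1) by simp
  note spanner = cone_knn_graph_spanner[OF _ _ this \<open>finite S\<close> cover \<open>finite \<C>\<close>]
  have "faulty_degree_spanner S E f (1 + \<epsilon>) \<and> card E \<le> card S * card \<C> * (2 * f + 1)"
    using G spanner[OF _ yao] spanner[OF _ theta] unfolding yao_graph_def theta_graph_def by blast
  moreover have "real (card S * card \<C> * (2 * f + 1)) \<le> real (2 * card \<C>) * real (f + 1) * real (card S)"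
    by (simp add: algebra_simps)
  ultimately show "faulty_degree_spanner S E f (1 + \<epsilon>) \<and>
      real (card E) \<le> real (2 * card \<C>) * real (f + 1) * real (card S)"
    by (meson of_nat_mono order_trans)
qed

end
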